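(* Equip $F^{\circ}[[T]]$ with the $(\pi,T)$-adic norm, making it an $F^{\circ}$-Banach module. Then $F^{\circ}[[T]]\widehat{\otimes}_{F^{\circ}}\underline{F}$ does not lie in the (essential) image of the functor $\mathrm{IndBan}_F\to\mathrm{IndBan}_{\underline F}$, $V\mapsto\underline V$.
   Context: $F$ is a complete non-trivially valued non-Archimedean field with pseudo-uniformiser $\pi$ and unit ball $F^{\circ}$. $\mathrm{IndBan}_{F^{\circ}}$, $\mathrm{IndBan}_F$ are the ind-completions of the categories of $F^{\circ}$-Banach modules, resp. $F$-Banach spaces, with bounded linear maps and completed projective tensor product extended along formal colimits. $\underline{F}:=\text{“}\varinjlim_{x\mapsto\pi x}\text{''}F^{\circ}$ is a monoid in $\mathrm{IndBan}_{F^{\circ}}$, and $\mathrm{IndBan}_{\underline F}$ its category of module objects; for $M\in\mathrm{IndBan}_{F^{\circ}}$, $M\widehat\otimes_{F^{\circ}}\underline F\cong\text{“}\varinjlim_{m\mapsto \pi m}\text{''}M$. For an $F$-Banach space $V$ with unit ball $V^{\circ}$, $\underline V:=\text{“}\varinjlim_{v\mapsto\pi v}\text{''}V^{\circ}$; a bounded $f:V\to W$ with $f(V^{\circ})\subseteq\pi^rW^{\circ}$ induces $\underline f$ via $\pi^{-i}V^{\circ}\to\pi^{r-i}W^{\circ}$; the functor is extended to $\mathrm{IndBan}_F$ by commuting with formal filtered colimits. The $(\pi,T)$-adic norm is $\|x\|=c^{-v}$ with $c>1$ fixed and $v$ maximal with $x\in(\pi,T)^v$. *)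

theory Defs
  imports "HOL-Computational_Algebra.Formal_Power_Series"
begin

definition nonarch_field :: "('k::field \<Rightarrow> real) \<Rightarrow> bool" where
  "nonarch_field av \<longleftrightarrow>
     (\<forall>x. av x \<ge> 0) \<and> (\<forall>x. av x = 0 \<longleftrightarrow> x = 0) \<and>
     (\<forall>x y. av (x * y) = av x * av y) \<and>
     (\<forall>x y. av (x + y) \<le> max (av x) (av y)) \<and>
     (\<exists>x. av x \<noteq> 0 \<and> av x \<noteq> 1) \<and>
     (\<forall>s :: nat \<Rightarrow> 'k. (\<forall>e>0. \<exists>N. \<forall>m\<ge>N. \<forall>n\<ge>N. av (s m - s n) < e) \<longrightarrow>
         (\<exists>l. (\<lambda>n. av (s n - l)) \<longlonglongrightarrow> 0))"

definition pseudo_unif :: "('k::field \<Rightarrow> real) \<Rightarrow> 'k \<Rightarrow> bool" where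
  "pseudo_unif av p \<longleftrightarrow> 0 < av p \<and> av p < 1"

definition nbanach :: "('k::field \<Rightarrow> real) \<Rightarrow> ('k \<Rightarrow> 'v::ab_group_add \<Rightarrow> 'v)
    \<Rightarrow> 'v set \<Rightarrow> ('v \<Rightarrow> real) \<Rightarrow> bool" where
  "nbanach av sc S N \<longleftrightarrow>
     0 \<in> S \<and> (\<forall>x\<in>S. \<forall>y\<in>S. x + y \<in> S) \<and> (\<forall>x\<in>S. - x \<in> S) \<and>
     (\<forall>a. \<forall>x\<in>S. sc a x \<in> S) \<and>
     (\<forall>x\<in>S. sc 1 x = x) \<and>
     (\<forall>a b. \<forall>x\<in>S. sc (a * b) x = sc a (sc b x)) \<and>
     (\<forall>a b. \<forall>x\<in>S. sc (a + b) x = sc a x + sc b x) \<and>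
     (\<forall>a. \<forall>x\<in>S. \<forall>y\<in>S. sc a (x + y) = sc a x + sc a y) \<and>
     (\<forall>x\<in>S. N x \<ge> 0) \<and> (\<forall>x\<in>S. N x = 0 \<longleftrightarrow> x = 0) \<and>
     (\<forall>x\<in>S. \<forall>y\<in>S. N (x + y) \<le> max (N x) (N y)) \<and>
     (\<forall>a. \<forall>x\<in>S. N (sc a x) = av a * N x) \<and>
     (\<forall>s :: nat \<Rightarrow> 'v. (\<forall>n. s n \<in> S) \<longrightarrow>
        (\<forall>e>0. \<exists>K. \<forall>m\<ge>K. \<forall>n\<ge>K. N (s m - s n) < e) \<longrightarrow>
        (\<exists>l\<in>S. (\<lambda>n. N (s n - l)) \<longlonglongrightarrow> 0))"

definition bdd_Flin :: "('k \<Rightarrow> 'm::ab_group_add \<Rightarrow> 'm) \<Rightarrow> ('k \<Rightarrow> 'n::ab_group_add \<Rightarrow> 'n)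
    \<Rightarrow> 'm set \<Rightarrow> ('m \<Rightarrow> real) \<Rightarrow> 'n set \<Rightarrow> ('n \<Rightarrow> real) \<Rightarrow> ('m \<Rightarrow> 'n) \<Rightarrow> bool" where
  "bdd_Flin s1 s2 C1 N1 C2 N2 g \<longleftrightarrow>
     (\<forall>x\<in>C1. g x \<in> C2) \<and> (\<forall>x\<in>C1. \<forall>y\<in>C1. g (x + y) = g x + g y) \<and>
     (\<forall>a. \<forall>x\<in>C1. g (s1 a x) = s2 a (g x)) \<and>
     (\<exists>K. \<forall>x\<in>C1. N2 (g x) \<le> K * N1 x)"

definition bdd_lin :: "('k \<Rightarrow> real) \<Rightarrow> ('k \<Rightarrow> 'm::ab_group_add \<Rightarrow> 'm) \<Rightarrow> ('k \<Rightarrow> 'n::ab_group_add \<Rightarrow> 'n)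
    \<Rightarrow> 'm set \<Rightarrow> ('m \<Rightarrow> real) \<Rightarrow> 'n set \<Rightarrow> ('n \<Rightarrow> real) \<Rightarrow> ('m \<Rightarrow> 'n) \<Rightarrow> bool" where
  "bdd_lin av s1 s2 C1 N1 C2 N2 g \<longleftrightarrow>
     (\<forall>x\<in>C1. g x \<in> C2) \<and> (\<forall>x\<in>C1. \<forall>y\<in>C1. g (x + y) = g x + g y) \<and>
     (\<forall>a. av a \<le> 1 \<longrightarrow> (\<forall>x\<in>C1. g (s1 a x) = s2 a (g x))) \<and>
     (\<exists>K. \<forall>x\<in>C1. N2 (g x) \<le> K * N1 x)"

definition directed_preorder :: "('i \<Rightarrow> 'i \<Rightarrow> bool) \<Rightarrow> bool" where
  "directed_preorder le \<longleftrightarrow> (\<forall>i. le i i) \<and> (\<forall>i j k. le i j \<longrightarrow> le j k \<longrightarrow> le i k) \<and>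
     (\<forall>i j. \<exists>k. le i k \<and> le j k)"

definition ban_diagram :: "('k::field \<Rightarrow> real) \<Rightarrow> ('k \<Rightarrow> 'v::ab_group_add \<Rightarrow> 'v)
   \<Rightarrow> ('i \<Rightarrow> 'i \<Rightarrow> bool) \<Rightarrow> ('i \<Rightarrow> 'v set) \<Rightarrow> ('i \<Rightarrow> 'v \<Rightarrow> real) \<Rightarrow> ('i \<Rightarrow> 'i \<Rightarrow> 'v \<Rightarrow> 'v) \<Rightarrow> bool" where
  "ban_diagram av sc le V nV f \<longleftrightarrow>
     directed_preorder le \<and> (\<forall>i. nbanach av sc (V i) (nV i)) \<and>
     (\<forall>i j. le i j \<longrightarrow> bdd_Flin sc sc (V i) (nV i) (V j) (nV j) (f i j)) \<and>
     (\<forall>i. \<forall>x\<in>V i. f i i x = x) \<and>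
     (\<forall>i j k. le i j \<longrightarrow> le j k \<longrightarrow> (\<forall>x\<in>V i. f j k (f i j x) = f i k x))"

text \<open>An ind-object is given by a directed preorder le, components C a (with norms N a)
  and transitions t a b for le a b. A morphism X \<rightarrow> Y is represented by an element of
  lim_a colim_b Hom(X_a, Y_b): for each a an index beta a and a bounded map phi a.\<close>

definition ind_hom ::
  "('k \<Rightarrow> real) \<Rightarrow> ('k \<Rightarrow> 'm::ab_group_add \<Rightarrow> 'm) \<Rightarrow> ('k \<Rightarrow> 'n::ab_group_add \<Rightarrow> 'n)
   \<Rightarrow> ('a \<Rightarrow> 'a \<Rightarrow> bool) \<Rightarrow> ('a \<Rightarrow> 'm set) \<Rightarrow> ('a \<Rightarrow> 'm \<Rightarrow> real) \<Rightarrow> ('a \<Rightarrow> 'a \<Rightarrow> 'm \<Rightarrow> 'm)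
   \<Rightarrow> ('b \<Rightarrow> 'b \<Rightarrow> bool) \<Rightarrow> ('b \<Rightarrow> 'n set) \<Rightarrow> ('b \<Rightarrow> 'n \<Rightarrow> real) \<Rightarrow> ('b \<Rightarrow> 'b \<Rightarrow> 'n \<Rightarrow> 'n)
   \<Rightarrow> ('a \<Rightarrow> 'b) \<Rightarrow> ('a \<Rightarrow> 'm \<Rightarrow> 'n) \<Rightarrow> bool" where
  "ind_hom av s1 s2 le1 C1 N1 t1 le2 C2 N2 t2 beta phi \<longleftrightarrow>
     (\<forall>a. bdd_lin av s1 s2 (C1 a) (N1 a) (C2 (beta a)) (N2 (beta a)) (phi a)) \<and>
     (\<forall>a a'. le1 a a' \<longrightarrow> (\<exists>b. le2 (beta a) b \<and> le2 (beta a') b \<and>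
        (\<forall>x\<in>C1 a. t2 (beta a) b (phi a x) = t2 (beta a') b (phi a' (t1 a a' x)))))"

text \<open>Equality of two represented morphisms (they agree in the colimit over the target).\<close>
definition ind_eq ::
  "('a \<Rightarrow> 'm set) \<Rightarrow> ('b \<Rightarrow> 'b \<Rightarrow> bool) \<Rightarrow> ('b \<Rightarrow> 'b \<Rightarrow> 'n \<Rightarrow> 'n)
   \<Rightarrow> ('a \<Rightarrow> 'b) \<Rightarrow> ('a \<Rightarrow> 'm \<Rightarrow> 'n) \<Rightarrow> ('a \<Rightarrow> 'b) \<Rightarrow> ('a \<Rightarrow> 'm \<Rightarrow> 'n) \<Rightarrow> bool" where
  "ind_eq C1 le2 t2 beta phi gamma psi \<longleftrightarrow>
     (\<forall>a. \<exists>b. le2 (beta a) b \<and> le2 (gamma a) b \<and>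
        (\<forall>x\<in>C1 a. t2 (beta a) b (phi a x) = t2 (gamma a) b (psi a x)))"

definition ind_iso ::
  "('k \<Rightarrow> real) \<Rightarrow> ('k \<Rightarrow> 'm::ab_group_add \<Rightarrow> 'm) \<Rightarrow> ('k \<Rightarrow> 'n::ab_group_add \<Rightarrow> 'n)
   \<Rightarrow> ('a \<Rightarrow> 'a \<Rightarrow> bool) \<Rightarrow> ('a \<Rightarrow> 'm set) \<Rightarrow> ('a \<Rightarrow> 'm \<Rightarrow> real) \<Rightarrow> ('a \<Rightarrow> 'a \<Rightarrow> 'm \<Rightarrow> 'm)
   \<Rightarrow> ('b \<Rightarrow> 'b \<Rightarrow> bool) \<Rightarrow> ('b \<Rightarrow> 'n set) \<Rightarrow> ('b \<Rightarrow> 'n \<Rightarrow> real) \<Rightarrow> ('b \<Rightarrow> 'b \<Rightarrow> 'n \<Rightarrow> 'n)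
   \<Rightarrow> bool" where
  "ind_iso av s1 s2 le1 C1 N1 t1 le2 C2 N2 t2 \<longleftrightarrow>
     (\<exists>beta phi gamma psi.
        ind_hom av s1 s2 le1 C1 N1 t1 le2 C2 N2 t2 beta phi \<and>
        ind_hom av s2 s1 le2 C2 N2 t2 le1 C1 N1 t1 gamma psi \<and>
        ind_eq C1 le1 t1 (\<lambda>a. gamma (beta a)) (\<lambda>a x. psi (beta a) (phi a x)) (\<lambda>a. a) (\<lambda>a x. x) \<and>
        ind_eq C2 le2 t2 (\<lambda>b. beta (gamma b)) (\<lambda>b x. phi (gamma b) (psi b x)) (\<lambda>b. b) (\<lambda>b x. x))"

definition unit_ball :: "('v \<Rightarrow> real) \<Rightarrow> 'v set \<Rightarrow> 'v set" where
  "unit_ball N S = {x \<in> S. N x \<le> 1}"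

text \<open>For V = "colim"_i V_i, underline V = "colim"_i "colim"_{v\<mapsto>\<pi>v} V_i^o. We present this
  double formal colimit as one diagram indexed by pairs (i,n) (n-th copy of V_i^o, standing
  for \<pi>^-n V_i^o), where (i,n) \<le> (j,m) iff i \<le> j and the induced map
  x \<mapsto> \<pi>^(m-n) f_ij x sends V_i^o into V_j^o; this map is the transition.\<close>
definition ul_le :: "('k::field \<Rightarrow> 'v::ab_group_add \<Rightarrow> 'v) \<Rightarrow> 'k \<Rightarrow> ('i \<Rightarrow> 'i \<Rightarrow> bool)
   \<Rightarrow> ('i \<Rightarrow> 'v set) \<Rightarrow> ('i \<Rightarrow> 'v \<Rightarrow> real) \<Rightarrow> ('i \<Rightarrow> 'i \<Rightarrow> 'v \<Rightarrow> 'v)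
   \<Rightarrow> 'i \<times> nat \<Rightarrow> 'i \<times> nat \<Rightarrow> bool" where
  "ul_le sc p le V nV f = (\<lambda>(i, n) (j, m). le i j \<and>
     (\<forall>x\<in>unit_ball (nV i) (V i). sc (p powi (int m - int n)) (f i j x) \<in> unit_ball (nV j) (V j)))"

definition ul_C :: "('i \<Rightarrow> 'v set) \<Rightarrow> ('i \<Rightarrow> 'v \<Rightarrow> real) \<Rightarrow> 'i \<times> nat \<Rightarrow> 'v set" where
  "ul_C V nV = (\<lambda>(i, n). unit_ball (nV i) (V i))"

definition ul_N :: "('i \<Rightarrow> 'v \<Rightarrow> real) \<Rightarrow> 'i \<times> nat \<Rightarrow> 'v \<Rightarrow> real" where
  "ul_N nV = (\<lambda>(i, n). nV i)"

definition ul_t :: "('k::field \<Rightarrow> 'v \<Rightarrow> 'v) \<Rightarrow> 'k \<Rightarrow> ('i \<Rightarrow> 'i \<Rightarrow> 'v \<Rightarrow> 'v)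
   \<Rightarrow> 'i \<times> nat \<Rightarrow> 'i \<times> nat \<Rightarrow> 'v \<Rightarrow> 'v" where
  "ul_t sc p f = (\<lambda>(i, n) (j, m) x. sc (p powi (int m - int n)) (f i j x))"

definition Fo_fps :: "('k::field \<Rightarrow> real) \<Rightarrow> 'k fps set" where
  "Fo_fps av = {g. \<forall>k. av (fps_nth g k) \<le> 1}"

text \<open>The ideal power (\<pi>,T)^v of F\<open>\<^sup>\<circ>\<close>[[T]], generated by the monomials \<pi>^(v-j) T^j.\<close>
definition piT_pow :: "('k::field \<Rightarrow> real) \<Rightarrow> 'k \<Rightarrow> nat \<Rightarrow> 'k fps set" where
  "piT_pow av p v = {g. \<exists>h. (\<forall>j\<le>v. h j \<in> Fo_fps av) \<and>
      g = (\<Sum>j\<le>v. fps_const (p ^ (v - j)) * fps_X ^ j * h j)}"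

definition adic_norm :: "('k::field \<Rightarrow> real) \<Rightarrow> 'k \<Rightarrow> real \<Rightarrow> 'k fps \<Rightarrow> real" where
  "adic_norm av p c g = (if g = 0 then 0 else c powr (- real (GREATEST v. g \<in> piT_pow av p v)))"

definition fps_smul :: "'k::field \<Rightarrow> 'k fps \<Rightarrow> 'k fps" where
  "fps_smul a g = fps_const a * g"

text \<open>M \<otimes> underline F = "colim"_{m\<mapsto>\<pi>m} M, indexed by nat, transition n \<le> m is \<pi>^(m-n).\<close>
definition tensF_t :: "'k::field \<Rightarrow> nat \<Rightarrow> nat \<Rightarrow> 'k fps \<Rightarrow> 'k fps" where
  "tensF_t p n m g = fps_const (p ^ (m - n)) * g"

end

theory Submission
  imports Defs
begin

text \<open>Suppose \<open>F\<^sup>\<circ>[[T]] \<otimes> F\<close> were isomorphic to \<open>V\<close> underlined. Restricted to the zeroth copy of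
  \<open>F\<^sup>\<circ>[[T]]\<close>, the isomorphism and its inverse give bounded maps \<open>\<psi>\<close> into the unit ball of a
  Banach space \<open>W\<close> and \<open>\<phi>\<close> back into \<open>F\<^sup>\<circ>[[T]]\<close> with \<open>\<pi>\<^sup>a \<phi> \<psi> = \<pi>\<^sup>b\<close>. Since \<open>\<parallel>T\<^sup>k\<parallel> = c\<^sup>-\<^sup>k \<rightarrow> 0\<close>,
  boundedness of \<open>\<psi>\<close> makes \<open>\<psi>(T\<^sup>k)\<close> divisible by any given power \<open>\<pi>\<^sup>m\<close> inside the unit ball
  of \<open>W\<close> once \<open>k\<close> is large. Applying \<open>\<phi>\<close>, \<open>\<pi>\<^sup>b T\<^sup>k\<close> becomes divisible by \<open>\<pi>\<^sup>a\<^sup>+\<^sup>m\<close> in \<open>F\<^sup>\<circ>[[T]]\<close>,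
  which its \<open>k\<close>-th coefficient forbids for \<open>m > b\<close>.\<close>

lemma nonarch_field_mult: "nonarch_field av \<Longrightarrow> av (a * b) = av a * av b"
  by (simp add: nonarch_field_def)

lemma nonarch_field_zero: "nonarch_field av \<Longrightarrow> av 0 = 0"
  by (simp add: nonarch_field_def)

lemma nonarch_field_nonneg: "nonarch_field av \<Longrightarrow> 0 \<le> av a"
  by (simp add: nonarch_field_def)

lemma nonarch_field_one:
  assumes "nonarch_field av"
  shows "av 1 = 1"
proof -
  have "av 1 = av 1 * av 1" using nonarch_field_mult[OF assms, of 1 1] by simp
  moreover have "av 1 \<noteq> 0" using assms by (simp add: nonarch_field_def)
  ultimately show ?thesis by (metis mult_cancel_left1)
qed

lemma nonarch_field_power:
  assumes "nonarch_field av"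
  shows "av (a ^ n) = av a ^ n"
  by (induction n) (simp_all add: nonarch_field_one[OF assms] nonarch_field_mult[OF assms])

lemma nonarch_field_inverse:
  assumes "nonarch_field av" "a \<noteq> 0"
  shows "av (inverse a) = inverse (av a)"
proof -
  have "av a * av (inverse a) = 1"
    using assms by (simp flip: nonarch_field_mult add: nonarch_field_one)
  then show ?thesis by (metis inverse_unique)
qed

lemma nonarch_field_sum_le:
  assumes "nonarch_field av" "finite A" "\<And>j. j \<in> A \<Longrightarrow> av (t j) \<le> B" "0 \<le> B"
  shows "av (sum t A) \<le> B"
  using assms(2,3)
proof (induction A rule: finite_induct)
  case empty
  then show ?case using nonarch_field_zero[OF assms(1)] assms(4) by simp
next
  case (insert x A)
  have "av (sum t (insert x A)) \<le> max (av (t x)) (av (sum t A))"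
    using insert.hyps assms(1) by (simp add: nonarch_field_def)
  moreover have "av (t x) \<le> B" "av (sum t A) \<le> B" using insert by simp_all
  ultimately show ?case by simp
qed

lemma pseudo_unif_nonzero:
  "nonarch_field av \<Longrightarrow> pseudo_unif av p \<Longrightarrow> p \<noteq> 0"
  by (auto simp: pseudo_unif_def nonarch_field_zero)

lemma fps_X_power_in_Fo_fps: "nonarch_field av \<Longrightarrow> (fps_X ^ k :: 'k::field fps) \<in> Fo_fps av"
  by (simp add: Fo_fps_def nonarch_field_one nonarch_field_zero)

lemma Fo_fps_divides_pi_power_X_power:
  assumes "nonarch_field av" "pseudo_unif av p" "g \<in> Fo_fps av"
    and "fps_const (p ^ m) * g = fps_const (p ^ b) * fps_X ^ k"
  shows "m \<le> b"
proof -
  have "p ^ m * fps_nth g k = p ^ b"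
    using arg_cong[OF assms(4), of "\<lambda>h. fps_nth h k"] by simp
  then have "av p ^ b = av p ^ m * av (fps_nth g k)"
    by (metis assms(1) nonarch_field_mult nonarch_field_power)
  also have "\<dots> \<le> av p ^ m"
    using assms(2,3)
    by (intro mult_left_le) (auto simp: Fo_fps_def pseudo_unif_def nonarch_field_nonneg[OF assms(1)])
  finally show ?thesis
    using assms(2) by (simp add: pseudo_unif_def power_decreasing_iff)
qed

lemma piT_pow_coeff_le:
  assumes "nonarch_field av" "pseudo_unif av p" "g \<in> piT_pow av p v"
  shows "av (fps_nth g k) \<le> av p ^ (v - k)"
proof -
  obtain h where h: "\<And>j. j \<le> v \<Longrightarrow> h j \<in> Fo_fps av"
    and g: "g = (\<Sum>j\<le>v. fps_const (p ^ (v - j)) * fps_X ^ j * h j)"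
    using assms(3) unfolding piT_pow_def by blast
  have p: "0 < av p" "av p < 1" using assms(2) by (auto simp: pseudo_unif_def)
  have "av (fps_nth (fps_const (p ^ (v - j)) * fps_X ^ j * h j) k) \<le> av p ^ (v - k)"
    if "j \<le> v" for j
  proof (cases "j \<le> k")
    case True
    have "av (fps_nth (h j) (k - j)) \<le> 1" using h[OF that] by (simp add: Fo_fps_def)
    then have "av (p ^ (v - j) * fps_nth (h j) (k - j)) \<le> av p ^ (v - j)"
      using p by (simp add: nonarch_field_mult[OF assms(1)] nonarch_field_power[OF assms(1)]
          mult_left_le)
    also have "\<dots> \<le> av p ^ (v - k)"
      using True p by (intro power_decreasing) auto
    finally show ?thesis
      using True by (simp add: mult.assoc fps_X_power_mult_nth)
  qed (use p in \<open>simp add: mult.assoc fps_X_power_mult_nth nonarch_field_zero[OF assms(1)]\<close>)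
  then show ?thesis
    unfolding g fps_sum_nth using p by (intro nonarch_field_sum_le[OF assms(1)]) auto
qed

lemma fps_X_power_in_piT_pow_iff:
  assumes "nonarch_field av" "pseudo_unif av p"
  shows "(fps_X ^ k :: 'k::field fps) \<in> piT_pow av p v \<longleftrightarrow> v \<le> k"
proof
  assume "fps_X ^ k \<in> piT_pow av p v"
  then have "1 \<le> av p ^ (v - k)"
    using piT_pow_coeff_le[OF assms, of "fps_X ^ k" v k] by (simp add: nonarch_field_one[OF assms(1)])
  then have "v - k = 0"
    using assms(2) unfolding pseudo_unif_def
    by (metis dual_order.strict_iff_not neq0_conv power_less_one_iff)
  then show "v \<le> k" by simp
next
  assume "v \<le> k"
  define h where "h = (\<lambda>j. if j = v then fps_X ^ (k - v) else (0 :: 'k fps))"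
  have "(\<Sum>j\<le>v. fps_const (p ^ (v - j)) * fps_X ^ j * h j) = fps_X ^ v * fps_X ^ (k - v)"
    by (simp add: h_def if_distrib cong: if_cong)
  also have "\<dots> = fps_X ^ k" using \<open>v \<le> k\<close> by (simp flip: power_add)
  finally show "fps_X ^ k \<in> piT_pow av p v"
    unfolding piT_pow_def
    by (auto intro!: exI[of _ h] simp: h_def fps_X_power_in_Fo_fps[OF assms(1)] Fo_fps_def
        nonarch_field_zero[OF assms(1)] nonarch_field_one[OF assms(1)])
qed

lemma adic_norm_fps_X_power:
  assumes "nonarch_field av" "pseudo_unif av p"
  shows "adic_norm av p c (fps_X ^ k :: 'k::field fps) = c powr - real k"
proof -
  have "(GREATEST v. (fps_X ^ k :: 'k fps) \<in> piT_pow av p v) = k"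
    by (rule Greatest_equality) (simp_all add: fps_X_power_in_piT_pow_iff[OF assms])
  then show ?thesis by (simp add: adic_norm_def)
qed

lemma adic_norm_fps_X_power_tendsto_zero:
  assumes "nonarch_field av" "pseudo_unif av p" "c > 1"
  shows "(\<lambda>k. adic_norm av p c (fps_X ^ k :: 'k::field fps)) \<longlonglongrightarrow> 0"
proof -
  have "c powr - real k = inverse (c ^ k)" for k
    using assms(3) by (simp add: powr_minus powr_realpow)
  then show ?thesis
    using LIMSEQ_inverse_realpow_zero[OF assms(3)]
    by (simp add: adic_norm_fps_X_power[OF assms(1,2)])
qed

lemma nbanach_small_in_scaled_unit_ball:
  assumes "nonarch_field av" "nbanach av sc S N" "a \<noteq> 0" "y \<in> S" "N y \<le> av a"
  shows "\<exists>z\<in>unit_ball N S. sc a z = y"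
proof
  define z where "z = sc (inverse a) y"
  have "av a \<noteq> 0" using assms(1,3) by (simp add: nonarch_field_def)
  then have "0 < av a" using nonarch_field_nonneg[OF assms(1), of a] by linarith
  have "z \<in> S" using assms(2,4) by (simp add: nbanach_def z_def)
  moreover have "N z = inverse (av a) * N y"
    using assms(2,4) nonarch_field_inverse[OF assms(1,3)] by (simp add: nbanach_def z_def)
  ultimately show "z \<in> unit_ball N S"
    using assms(5) \<open>0 < av a\<close> by (simp add: unit_ball_def inverse_eq_divide)
  have "sc a z = sc (a * inverse a) y"
    using assms(2,4) by (simp add: nbanach_def z_def)
  then show "sc a z = y"
    using assms(2-4) by (simp add: nbanach_def)
qed

lemma pi_power_not_factor_through_unit_ball:
  fixes av :: "'k::field \<Rightarrow> real"
  assumes "nonarch_field av" "pseudo_unif av p" "c > 1" "nbanach av sc W N"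
    and psi: "bdd_lin av fps_smul sc (Fo_fps av) (adic_norm av p c) (unit_ball N W) N psi"
    and phi: "bdd_lin av sc fps_smul (unit_ball N W) N (Fo_fps av) (adic_norm av p c) phi"
    and factor: "\<And>x. x \<in> Fo_fps av \<Longrightarrow> fps_const (p ^ a) * phi (psi x) = fps_const (p ^ b) * x"
  shows False
proof -
  define m where "m = Suc (a + b)"
  have p: "0 < av p" "av p \<le> 1" "p ^ m \<noteq> 0"
    using assms(1,2) by (auto simp: pseudo_unif_def pseudo_unif_nonzero)
  have pm: "av (p ^ m) = av p ^ m" by (rule nonarch_field_power[OF assms(1)])
  obtain K where K: "\<And>x. x \<in> Fo_fps av \<Longrightarrow> N (psi x) \<le> K * adic_norm av p c x"
    using psi unfolding bdd_lin_def by blast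
  have "(\<lambda>k. K * adic_norm av p c (fps_X ^ k :: 'k fps)) \<longlonglongrightarrow> 0"
    using tendsto_mult_right_zero[OF adic_norm_fps_X_power_tendsto_zero[OF assms(1-3)]] .
  then have "eventually (\<lambda>k. K * adic_norm av p c (fps_X ^ k :: 'k fps) < av p ^ m) sequentially"
    using p(1) by (intro order_tendstoD(2)) auto
  then obtain k where k: "K * adic_norm av p c (fps_X ^ k :: 'k fps) < av p ^ m"
    by (auto simp: eventually_sequentially)
  define x :: "'k fps" where "x = fps_X ^ k"
  have x: "x \<in> Fo_fps av" using fps_X_power_in_Fo_fps[OF assms(1)] by (simp add: x_def)
  have "N (psi x) \<le> av (p ^ m)" using K[OF x] k pm by (simp add: x_def)
  moreover have "psi x \<in> W" using psi x by (simp add: bdd_lin_def unit_ball_def)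
  ultimately obtain z where z: "z \<in> unit_ball N W" "sc (p ^ m) z = psi x"
    using nbanach_small_in_scaled_unit_ball[OF assms(1,4) p(3)] by blast
  have "av (p ^ m) \<le> 1" using p pm by (simp add: power_le_one)
  then have "phi (sc (p ^ m) z) = fps_const (p ^ m) * phi z"
    using phi z(1) by (simp add: bdd_lin_def fps_smul_def)
  then have "fps_const (p ^ (a + m)) * phi z = fps_const (p ^ b) * fps_X ^ k"
    using factor[OF x] z(2) by (simp add: x_def power_add mult.assoc flip: fps_const_mult)
  moreover have "phi z \<in> Fo_fps av" using phi z(1) by (simp add: bdd_lin_def)
  ultimately have "a + m \<le> b" by (intro Fo_fps_divides_pi_power_X_power[OF assms(1,2)])
  then show False by (simp add: m_def)
qed

theorem lemma2p40:
  fixes av :: "'k::field \<Rightarrow> real" and p :: 'k and c :: real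
    and sc :: "'k \<Rightarrow> 'v::ab_group_add \<Rightarrow> 'v"
    and le :: "'i \<Rightarrow> 'i \<Rightarrow> bool" and V :: "'i \<Rightarrow> 'v set" and nV :: "'i \<Rightarrow> 'v \<Rightarrow> real"
    and f :: "'i \<Rightarrow> 'i \<Rightarrow> 'v \<Rightarrow> 'v"
  assumes "nonarch_field av" and "pseudo_unif av p" and "c > 1"
    and "ban_diagram av sc le V nV f"
  shows "\<not> ind_iso av sc fps_smul
            (ul_le sc p le V nV f) (ul_C V nV) (ul_N nV) (ul_t sc p f)
            (\<le>) (\<lambda>n. Fo_fps av) (\<lambda>n. adic_norm av p c) (tensF_t p)"
proof
  assume "ind_iso av sc fps_smul
            (ul_le sc p le V nV f) (ul_C V nV) (ul_N nV) (ul_t sc p f)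
            (\<le>) (\<lambda>n. Fo_fps av) (\<lambda>n. adic_norm av p c) (tensF_t p)"
  then obtain beta phi gamma psi where
    to_ind: "ind_hom av sc fps_smul (ul_le sc p le V nV f) (ul_C V nV) (ul_N nV) (ul_t sc p f)
       (\<le>) (\<lambda>n. Fo_fps av) (\<lambda>n. adic_norm av p c) (tensF_t p) beta phi"
    and from_ind: "ind_hom av fps_smul sc (\<le>) (\<lambda>n. Fo_fps av) (\<lambda>n. adic_norm av p c) (tensF_t p)
       (ul_le sc p le V nV f) (ul_C V nV) (ul_N nV) (ul_t sc p f) gamma psi"
    and left_inverse: "ind_eq (\<lambda>n. Fo_fps av) (\<le>) (tensF_t p) (\<lambda>b. beta (gamma b))
       (\<lambda>b x. phi (gamma b) (psi b x)) (\<lambda>b. b) (\<lambda>b x. x)"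
    unfolding ind_iso_def by blast
  obtain i n where i: "gamma 0 = (i, n)" by fastforce
  obtain b where "\<forall>x\<in>Fo_fps av.
      tensF_t p (beta (gamma 0)) b (phi (gamma 0) (psi 0 x)) = tensF_t p 0 b x"
    using left_inverse unfolding ind_eq_def by blast
  then have "\<And>x. x \<in> Fo_fps av \<Longrightarrow>
      fps_const (p ^ (b - beta (gamma 0))) * phi (gamma 0) (psi 0 x) = fps_const (p ^ b) * x"
    by (simp add: tensF_t_def)
  moreover have "bdd_lin av sc fps_smul (unit_ball (nV i) (V i)) (nV i) (Fo_fps av)
      (adic_norm av p c) (phi (gamma 0))"
    using to_ind i unfolding ind_hom_def by (metis ul_C_def ul_N_def case_prod_conv)
  moreover have "bdd_lin av fps_smul sc (Fo_fps av) (adic_norm av p c)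
      (unit_ball (nV i) (V i)) (nV i) (psi 0)"
    using from_ind i unfolding ind_hom_def by (metis ul_C_def ul_N_def case_prod_conv)
  moreover have "nbanach av sc (V i) (nV i)" using assms(4) by (simp add: ban_diagram_def)
  ultimately show False using pi_power_not_factor_through_unit_ball[OF assms(1-3)] by blast
qed

end
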